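(* Let $R\in[0,\tfrac34]$ and let $S_1\subseteq S$ be the set of offline vertices covered by the advice $A$. Run the algorithm described in the context with $$f_j(x)=f_{\mathsf U}(x):=\min\Bigl\{\frac{1-R}{1-x},1\Bigr\}\ \ (j\in S\setminus S_1),\qquad f_j(x)=f_{\mathsf L}(x):=\max\Bigl\{1-\frac{1-R}{x},0\Bigr\}\ \ (j\in S_1).$$ Then for every instance $G$ and advice $A$, $$\mathsf{ALG}(G,A)\ \ge\ \bigl(2\sqrt{1-R}-(1-R)\bigr)\cdot\mathsf{ADVICE}(G,A),$$ i.e. the algorithm is $C$-consistent with $C=2\sqrt{1-R}-(1-R)$, equivalently $\sqrt{1-R}+\sqrt{1-C}=1$.
   Context: Setting (two-stage vertex-weighted bipartite matching with advice). A bipartite graph $G=(D,S,E)$ has offline vertices $S$, each $j\in S$ carrying a weight $w_j\ge 0$, and online vertices $D=D_1\sqcup D_2$ arriving in two stages. $E_1$ (resp. $E_2$) denotes the set of edges between $D_1$ (resp. $D_2$) and $S$. The advice is a matching $A\subseteq E_1$; $S_1\subseteq S$ denotes the set of offline vertices covered by $A$. $\mathsf{ADVICE}(G,A)=\sum_{j\in S_1}w_j+\max\{\sum_{j\text{ covered by }M}w_j: M\subseteq E_2\text{ a matching covering no vertex of }S_1\}$ (the value of following the advice exactly in the first stage and then matching optimally). Algorithm (parameters: functions $f_j:[0,1]\to[0,1]$, $j\in S$). First stage: after $D_1,E_1,A$ are revealed, let $\bar x$ be an optimal solution of (P1): maximize $\sum_{j\in S} w_j\bigl(x_j-\int_0^{x_j}f_j(t)\,dt\bigr)$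 subject to $x_i:=\sum_{j:(i,j)\in E_1}x_{ij}\le 1$ ($i\in D_1$), $x_j:=\sum_{i:(i,j)\in E_1}x_{ij}\le 1$ ($j\in S$), $x_{ij}\ge0$. Second stage: after $D_2,E_2$ are revealed, let $\bar y$ be an optimal solution of (P2): maximize $\sum_{j\in S}w_jy_j$ subject to $y_i:=\sum_{j:(i,j)\in E_2}y_{ij}\le 1$ ($i\in D_2$), $y_j:=\sum_{i:(i,j)\in E_2}y_{ij}\le 1-\bar x_j$ ($j\in S$), $y_{ij}\ge 0$. The algorithm's value is $\mathsf{ALG}(G,A)=\sum_{j\in S}w_j(\bar x_j+\bar y_j)$. *)

theory Defs
  imports "HOL-Analysis.Analysis"
begin

text \<open>Edges are pairs (online vertex, offline vertex).  A set of edges is a matching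
  if no two distinct edges share an endpoint.\<close>
definition is_matching :: "('d \<times> 's) set \<Rightarrow> bool" where
  "is_matching M \<longleftrightarrow> (\<forall>e\<in>M. \<forall>e'\<in>M. e \<noteq> e' \<longrightarrow> fst e \<noteq> fst e' \<and> snd e \<noteq> snd e')"

definition covered_off :: "('d \<times> 's) set \<Rightarrow> 's set" where
  "covered_off M = snd ` M"

definition load_on :: "('d \<times> 's) set \<Rightarrow> ('d \<times> 's \<Rightarrow> real) \<Rightarrow> 'd \<Rightarrow> real" where
  "load_on E x i = (\<Sum>e\<in>{e\<in>E. fst e = i}. x e)"

definition load_off :: "('d \<times> 's) set \<Rightarrow> ('d \<times> 's \<Rightarrow> real) \<Rightarrow> 's \<Rightarrow> real" where
  "load_off E x j = (\<Sum>e\<in>{e\<in>E. snd e = j}. x e)"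

definition advice_value ::
  "'s set \<Rightarrow> ('s \<Rightarrow> real) \<Rightarrow> ('d \<times> 's) set \<Rightarrow> ('d \<times> 's) set \<Rightarrow> real" where
  "advice_value S w E2 A =
     (\<Sum>j\<in>covered_off A. w j) +
     Max {(\<Sum>j\<in>covered_off M. w j) | M. M \<subseteq> E2 \<and> is_matching M \<and> covered_off M \<inter> covered_off A = {}}"

definition P1_feasible ::
  "'d set \<Rightarrow> 's set \<Rightarrow> ('d \<times> 's) set \<Rightarrow> ('d \<times> 's \<Rightarrow> real) \<Rightarrow> bool" where
  "P1_feasible D1 S E1 x \<longleftrightarrow>
     (\<forall>e\<in>E1. 0 \<le> x e) \<and> (\<forall>i\<in>D1. load_on E1 x i \<le> 1) \<and> (\<forall>j\<in>S. load_off E1 x j \<le> 1)"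

definition P1_obj ::
  "'s set \<Rightarrow> ('s \<Rightarrow> real) \<Rightarrow> ('s \<Rightarrow> real \<Rightarrow> real) \<Rightarrow> ('d \<times> 's) set \<Rightarrow> ('d \<times> 's \<Rightarrow> real) \<Rightarrow> real" where
  "P1_obj S w f E1 x =
     (\<Sum>j\<in>S. w j * (load_off E1 x j - integral {0..load_off E1 x j} (f j)))"

definition P1_optimal ::
  "'d set \<Rightarrow> 's set \<Rightarrow> ('s \<Rightarrow> real) \<Rightarrow> ('s \<Rightarrow> real \<Rightarrow> real) \<Rightarrow> ('d \<times> 's) set \<Rightarrow> ('d \<times> 's \<Rightarrow> real) \<Rightarrow> bool" where
  "P1_optimal D1 S w f E1 x \<longleftrightarrow>
     P1_feasible D1 S E1 x \<and> (\<forall>x'. P1_feasible D1 S E1 x' \<longrightarrow> P1_obj S w f E1 x' \<le> P1_obj S w f E1 x)"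

definition P2_feasible ::
  "'d set \<Rightarrow> 's set \<Rightarrow> ('d \<times> 's) set \<Rightarrow> ('d \<times> 's) set \<Rightarrow> ('d \<times> 's \<Rightarrow> real) \<Rightarrow> ('d \<times> 's \<Rightarrow> real) \<Rightarrow> bool" where
  "P2_feasible D2 S E1 E2 xbar y \<longleftrightarrow>
     (\<forall>e\<in>E2. 0 \<le> y e) \<and> (\<forall>i\<in>D2. load_on E2 y i \<le> 1) \<and>
     (\<forall>j\<in>S. load_off E2 y j \<le> 1 - load_off E1 xbar j)"

definition P2_obj :: "'s set \<Rightarrow> ('s \<Rightarrow> real) \<Rightarrow> ('d \<times> 's) set \<Rightarrow> ('d \<times> 's \<Rightarrow> real) \<Rightarrow> real" where
  "P2_obj S w E2 y = (\<Sum>j\<in>S. w j * load_off E2 y j)"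

definition P2_optimal ::
  "'d set \<Rightarrow> 's set \<Rightarrow> ('s \<Rightarrow> real) \<Rightarrow> ('d \<times> 's) set \<Rightarrow> ('d \<times> 's) set \<Rightarrow> ('d \<times> 's \<Rightarrow> real) \<Rightarrow> ('d \<times> 's \<Rightarrow> real) \<Rightarrow> bool" where
  "P2_optimal D2 S w E1 E2 xbar y \<longleftrightarrow>
     P2_feasible D2 S E1 E2 xbar y \<and>
     (\<forall>y'. P2_feasible D2 S E1 E2 xbar y' \<longrightarrow> P2_obj S w E2 y' \<le> P2_obj S w E2 y)"

definition alg_value ::
  "'s set \<Rightarrow> ('s \<Rightarrow> real) \<Rightarrow> ('d \<times> 's) set \<Rightarrow> ('d \<times> 's) set \<Rightarrow> ('d \<times> 's \<Rightarrow> real) \<Rightarrow> ('d \<times> 's \<Rightarrow> real) \<Rightarrow> real" where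
  "alg_value S w E1 E2 xbar ybar = (\<Sum>j\<in>S. w j * (load_off E1 xbar j + load_off E2 ybar j))"

definition fU :: "real \<Rightarrow> real \<Rightarrow> real" where
  "fU R x = min ((1 - R) / (1 - x)) 1"

definition fL :: "real \<Rightarrow> real \<Rightarrow> real" where
  "fL R x = max (1 - (1 - R) / x) 0"

end

theory Submission
  imports Defs
begin

text \<open>The objective of (P1) is concave, with slope 1 - f j (x j) at vertex j, so optimality of xbar
  gives the variational inequality sum_j w j (1 - f j (xbar j)) (a j - xbar j) \<le> 0 against the
  indicator a of the advice, which is itself feasible for (P1).  In the second stage the optimal
  advice matching M can be routed into the residual capacities, so (P2) collects at least
  sum over j in M of w j (1 - xbar j).  Adding the nonpositive variational inequality reduces the
  claim to one inequality per offline vertex; with s = sqrt (1 - R) the two sides differ by a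
  square, which is how f_L and f_U were chosen.\<close>

definition consistency :: "real \<Rightarrow> real" where
  "consistency R = 2 * sqrt (1 - R) - (1 - R)"

lemma one_minus_consistency: "0 \<le> R \<Longrightarrow> R \<le> 1 \<Longrightarrow> 1 - consistency R = (1 - sqrt (1 - R))\<^sup>2"
  unfolding consistency_def by (simp add: power2_eq_square algebra_simps)

text \<open>At x = 0, resp. x = 1, the division by zero makes fL, resp. fU, take junk values;
  the following continuous versions agree with them everywhere else, which is all that the
  integrals in (P1) can see.\<close>

definition fL_cont :: "real \<Rightarrow> real \<Rightarrow> real" where
  "fL_cont R x = 1 - (1 - R) / max x (1 - R)"

definition fU_cont :: "real \<Rightarrow> real \<Rightarrow> real" where
  "fU_cont R x = (1 - R) / (1 - min x R)"

lemma isCont_fL_cont: "R < 1 \<Longrightarrow> isCont (fL_cont R) x"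
  unfolding fL_cont_def by (intro continuous_intros) auto

lemma isCont_fU_cont: "R < 1 \<Longrightarrow> isCont (fU_cont R) x"
  unfolding fU_cont_def by (intro continuous_intros) auto

lemma mono_fL_cont: "R < 1 \<Longrightarrow> mono (fL_cont R)"
  unfolding fL_cont_def mono_def by (auto intro!: divide_left_mono simp: max_def)

lemma mono_fU_cont: "R < 1 \<Longrightarrow> mono (fU_cont R)"
  unfolding fU_cont_def mono_def by (auto intro!: divide_left_mono simp: min_def)

lemma fU_cont_nonneg: "R < 1 \<Longrightarrow> 0 \<le> fU_cont R x"
  unfolding fU_cont_def by (auto simp: min_def)

lemma integral_fL_eq_fL_cont: "R < 1 \<Longrightarrow> integral {0..z} (fL R) = integral {0..z} (fL_cont R)"
  by (rule integral_spike[of "{0}"]) (auto simp: fL_def fL_cont_def max_def field_simps)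

lemma integral_fU_eq_fU_cont:
  "R < 1 \<Longrightarrow> z \<le> 1 \<Longrightarrow> integral {0..z} (fU R) = integral {0..z} (fU_cont R)"
  by (rule integral_spike[of "{1}"]) (auto simp: fU_def fU_cont_def min_def field_simps)

lemma consistency_le_fL_cont:
  assumes "0 \<le> R" "R < 1" "0 \<le> x" "x \<le> 1"
  shows "consistency R \<le> x + (1 - fL_cont R x) * (1 - x)"
proof -
  define s where "s = sqrt (1 - R)"
  have R: "1 - R = s\<^sup>2" and C: "consistency R = 2 * s - s\<^sup>2" and "s > 0"
    using assms by (simp_all add: s_def consistency_def)
  show ?thesis
  proof (cases "x \<le> 1 - R")
    case True
    then have "x + (1 - fL_cont R x) * (1 - x) - consistency R = (1 - s)\<^sup>2"
      using R \<open>s > 0\<close> unfolding fL_cont_def C R by (simp add: max_def power2_eq_square algebra_simps)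
    then show ?thesis by (metis diff_ge_0_iff_ge zero_le_power2)
  next
    case False
    then have "x > 0" using assms by simp
    with False have "x + (1 - fL_cont R x) * (1 - x) - consistency R = (x - s)\<^sup>2 / x"
      using R \<open>s > 0\<close> unfolding fL_cont_def C R by (simp add: max_def field_simps power2_eq_square)
    with \<open>x > 0\<close> show ?thesis by (metis diff_ge_0_iff_ge divide_nonneg_pos zero_le_power2)
  qed
qed

lemma fU_cont_le_consistency:
  assumes "0 \<le> R" "R < 1" "0 \<le> x" "x \<le> 1"
  shows "(1 - fU_cont R x) * x \<le> 1 - consistency R"
proof -
  define s where "s = sqrt (1 - R)"
  have R: "R = 1 - s\<^sup>2" using assms by (simp add: s_def)
  have C: "1 - consistency R = (1 - s)\<^sup>2" using assms one_minus_consistency s_def by simp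
  show ?thesis
  proof (cases "R \<le> x")
    case True
    then show ?thesis using assms by (simp add: fU_cont_def C min_def)
  next
    case False
    then have "x < 1" using assms by simp
    with False have "(1 - s)\<^sup>2 - (1 - fU_cont R x) * x = (x - (1 - s))\<^sup>2 / (1 - x)"
      unfolding fU_cont_def R by (simp add: min_def field_simps power2_eq_square)
    with \<open>x < 1\<close> show ?thesis unfolding C by (metis diff_ge_0_iff_ge divide_nonneg_pos zero_le_power2 diff_gt_0_iff_gt)
  qed
qed

lemma integral_increment_le_mono:
  fixes g :: "real \<Rightarrow> real"
  assumes "mono g" and "c \<le> a" and "c \<le> b"
  shows "integral {c..b} g - integral {c..a} g \<le> (b - a) * g b"
proof -
  have int: "g integrable_on {u..v}" for u v
    using assms(1) by (simp add: integrable_on_mono_on mono_imp_mono_on)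
  show ?thesis
  proof (cases "a \<le> b")
    case True
    have "integral {c..a} g + integral {a..b} g = integral {c..b} g"
      using Henstock_Kurzweil_Integration.integral_combine[OF \<open>c \<le> a\<close> True int] .
    moreover have "integral {a..b} g \<le> integral {a..b} (\<lambda>_. g b)"
      by (rule integral_le[OF int]) (auto simp: assms(1) monoD)
    ultimately show ?thesis using True by (simp add: mult.commute)
  next
    case False
    have "integral {c..b} g + integral {b..a} g = integral {c..a} g"
      using Henstock_Kurzweil_Integration.integral_combine[OF \<open>c \<le> b\<close> _ int] False by simp
    moreover have "integral {b..a} (\<lambda>_. g b) \<le> integral {b..a} g"
      by (rule integral_le[OF _ int]) (auto simp: assms(1) monoD)
    ultimately show ?thesis using False by (simp add: algebra_simps)
  qed
qed

lemma load_on_convex_comb: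
  "load_on E (\<lambda>e. (1 - t) * x e + t * y e) i = (1 - t) * load_on E x i + t * load_on E y i"
  unfolding load_on_def by (simp add: sum.distrib sum_distrib_left)

lemma load_off_convex_comb:
  "load_off E (\<lambda>e. (1 - t) * x e + t * y e) j = (1 - t) * load_off E x j + t * load_off E y j"
  unfolding load_off_def by (simp add: sum.distrib sum_distrib_left)

lemma load_off_nonneg: "\<forall>e\<in>E. 0 \<le> x e \<Longrightarrow> 0 \<le> load_off E x j"
  unfolding load_off_def by (rule sum_nonneg) auto

lemma P1_feasible_load_off_bounds:
  "P1_feasible D1 S E1 x \<Longrightarrow> j \<in> S \<Longrightarrow> 0 \<le> load_off E1 x j \<and> load_off E1 x j \<le> 1"
  unfolding P1_feasible_def by (auto intro: load_off_nonneg)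

lemma P1_feasible_convex_comb:
  assumes "P1_feasible D1 S E1 x" and "P1_feasible D1 S E1 y" and "0 \<le> t" and "t \<le> 1"
  shows "P1_feasible D1 S E1 (\<lambda>e. (1 - t) * x e + t * y e)"
  using assms unfolding P1_feasible_def load_on_convex_comb load_off_convex_comb
  by (auto intro: convex_bound_le)

lemma P1_optimal_integral_cong:
  assumes "P1_optimal D1 S w f E1 x"
    and "\<And>j z. j \<in> S \<Longrightarrow> 0 \<le> z \<Longrightarrow> z \<le> 1 \<Longrightarrow> integral {0..z} (f j) = integral {0..z} (g j)"
  shows "P1_optimal D1 S w g E1 x"
proof -
  have "P1_obj S w f E1 x' = P1_obj S w g E1 x'" if "P1_feasible D1 S E1 x'" for x'
    unfolding P1_obj_def
    using assms(2) P1_feasible_load_off_bounds[OF that] by (intro sum.cong) auto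
  with assms(1) show ?thesis unfolding P1_optimal_def by auto
qed

lemma P1_obj_supergradient:
  assumes "\<forall>j\<in>S. 0 \<le> w j" and "\<And>j. j \<in> S \<Longrightarrow> mono (f j)"
    and "\<forall>j\<in>S. 0 \<le> load_off E1 x j" and "\<forall>j\<in>S. 0 \<le> load_off E1 y j"
  shows "(\<Sum>j\<in>S. w j * (1 - f j (load_off E1 y j)) * (load_off E1 y j - load_off E1 x j))
    \<le> P1_obj S w f E1 y - P1_obj S w f E1 x"
proof -
  have "(\<Sum>j\<in>S. w j * (1 - f j (load_off E1 y j)) * (load_off E1 y j - load_off E1 x j))
      \<le> (\<Sum>j\<in>S. w j * ((load_off E1 y j - integral {0..load_off E1 y j} (f j))
                       - (load_off E1 x j - integral {0..load_off E1 x j} (f j))))"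
    unfolding mult.assoc
  proof (intro sum_mono mult_left_mono)
    fix j assume "j \<in> S"
    then show "(1 - f j (load_off E1 y j)) * (load_off E1 y j - load_off E1 x j)
        \<le> load_off E1 y j - integral {0..load_off E1 y j} (f j)
          - (load_off E1 x j - integral {0..load_off E1 x j} (f j))"
      using integral_increment_le_mono[OF assms(2), of j 0 "load_off E1 x j" "load_off E1 y j"] assms(3,4)
      by (simp add: algebra_simps)
    show "0 \<le> w j" using assms(1) \<open>j \<in> S\<close> by simp
  qed
  also have "\<dots> = P1_obj S w f E1 y - P1_obj S w f E1 x"
    unfolding P1_obj_def by (simp add: sum_subtractf right_diff_distrib)
  finally show ?thesis .
qed

lemma P1_optimal_first_order:
  assumes opt: "P1_optimal D1 S w f E1 xbar" and feas: "P1_feasible D1 S E1 x"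
    and w: "\<forall>j\<in>S. 0 \<le> w j"
    and cont: "\<And>j z. j \<in> S \<Longrightarrow> isCont (f j) z" and mono: "\<And>j. j \<in> S \<Longrightarrow> mono (f j)"
  shows "(\<Sum>j\<in>S. w j * (1 - f j (load_off E1 xbar j)) * (load_off E1 x j - load_off E1 xbar j)) \<le> 0"
proof -
  define xb where "xb = load_off E1 xbar"
  define d where "d j = load_off E1 x j - xb j" for j
  define slope where "slope t = (\<Sum>j\<in>S. w j * (1 - f j (xb j + t * d j)) * d j)" for t
  have feas_bar: "P1_feasible D1 S E1 xbar" using opt by (simp add: P1_optimal_def)
  have "t * slope t \<le> 0" if t: "0 < t" "t < 1" for t
  proof -
    define xt where "xt e = (1 - t) * xbar e + t * x e" for e
    have feas_t: "P1_feasible D1 S E1 xt"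
      unfolding xt_def using P1_feasible_convex_comb[OF feas_bar feas] t by simp
    have load_xt: "load_off E1 xt j = xb j + t * d j" for j
      unfolding xt_def load_off_convex_comb xb_def d_def by (simp add: algebra_simps)
    have "t * slope t = (\<Sum>j\<in>S. w j * (1 - f j (load_off E1 xt j)) * (load_off E1 xt j - xb j))"
      unfolding slope_def load_xt by (simp add: sum_distrib_left mult_ac)
    also have "\<dots> \<le> P1_obj S w f E1 xt - P1_obj S w f E1 xbar"
      unfolding xb_def using P1_feasible_load_off_bounds[OF feas_bar] P1_feasible_load_off_bounds[OF feas_t]
      by (intro P1_obj_supergradient w mono) auto
    also have "\<dots> \<le> 0"
      using opt feas_t unfolding P1_optimal_def by simp
    finally show ?thesis .
  qed
  then have "\<forall>\<^sub>F t in at_right 0. slope t \<le> 0"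
    unfolding eventually_at_right_field by (auto intro!: exI[of _ 1] simp: mult_le_0_iff)
  moreover have "(slope \<longlongrightarrow> slope 0) (at_right 0)"
    unfolding slope_def by (intro tendsto_intros isCont_tendsto_compose[OF cont]) auto
  ultimately have "slope 0 \<le> 0"
    by (intro tendsto_upperbound) auto
  then show ?thesis unfolding slope_def d_def xb_def by (simp add: mult_ac)
qed

lemma covered_off_subset: "M \<subseteq> D \<times> S \<Longrightarrow> covered_off M \<subseteq> S"
  unfolding covered_off_def by auto

lemma load_off_matching:
  assumes "finite E" and "M \<subseteq> E" and "is_matching M"
  shows "load_off E (\<lambda>e. if e \<in> M then h (snd e) else 0) j = (if j \<in> covered_off M then h j else 0)"
proof -
  have "{e\<in>E. snd e = j} \<inter> M = {e. e \<in> M \<and> snd e = j}" using assms(2) by auto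
  also have "\<dots> = (if j \<in> covered_off M then {e. e \<in> M \<and> snd e = j} else {})"
    by (force simp: covered_off_def)
  finally have "load_off E (\<lambda>e. if e \<in> M then h (snd e) else 0) j
      = (if j \<in> covered_off M then (\<Sum>e | e \<in> M \<and> snd e = j. h j) else 0)"
    unfolding load_off_def using assms(1) by (simp add: sum.inter_restrict[symmetric])
  moreover have "card {e. e \<in> M \<and> snd e = j} = 1" if j: "j \<in> covered_off M"
  proof -
    obtain e where "e \<in> M" "snd e = j" using j unfolding covered_off_def by blast
    with assms(3) have "{e. e \<in> M \<and> snd e = j} = {e}" by (auto simp: is_matching_def)
    then show ?thesis by simp
  qed
  ultimately show ?thesis by simp
qed

lemma load_on_matching_le:
  assumes "finite E" and "is_matching M" and "\<forall>j\<in>covered_off M. h j \<le> 1"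
  shows "load_on E (\<lambda>e. if e \<in> M then h (snd e) else 0) i \<le> 1"
proof -
  define T where "T = {e\<in>E. fst e = i} \<inter> M"
  have "load_on E (\<lambda>e. if e \<in> M then h (snd e) else 0) i = sum (h \<circ> snd) T"
    unfolding load_on_def T_def using assms(1) by (simp add: sum.inter_restrict)
  moreover have "T = {} \<or> (\<exists>e\<in>M. T = {e})"
    using assms(2) unfolding T_def is_matching_def by blast
  ultimately show ?thesis using assms(3) by (auto simp: covered_off_def)
qed

lemma P1_feasible_matching:
  assumes "finite E1" and "A \<subseteq> E1" and "is_matching A"
  shows "P1_feasible D1 S E1 (\<lambda>e. if e \<in> A then 1 else 0)"
  using load_on_matching_le[OF assms(1,3), of "\<lambda>_. 1"] load_off_matching[OF assms, of "\<lambda>_. 1"]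
  unfolding P1_feasible_def by simp

lemma P2_optimal_ge_matching:
  assumes "finite E2" and "M \<subseteq> E2" and "is_matching M" and "covered_off M \<subseteq> S"
    and "\<forall>j\<in>S. 0 \<le> load_off E1 xbar j \<and> load_off E1 xbar j \<le> 1" and "P2_optimal D2 S w E1 E2 xbar ybar"
  shows "(\<Sum>j\<in>S. w j * of_bool (j \<in> covered_off M) * (1 - load_off E1 xbar j)) \<le> P2_obj S w E2 ybar"
proof -
  define y where "y e = (if e \<in> M then 1 - load_off E1 xbar (snd e) else 0)" for e
  have load_y: "load_off E2 y j = (if j \<in> covered_off M then 1 - load_off E1 xbar j else 0)" for j
    unfolding y_def using load_off_matching[OF assms(1-3), of "\<lambda>j. 1 - load_off E1 xbar j"] by simp
  have xb: "0 \<le> load_off E1 xbar j" "load_off E1 xbar j \<le> 1" if "j \<in> covered_off M" for j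
    using that assms(4,5) by blast+
  have "P2_feasible D2 S E1 E2 xbar y"
    unfolding P2_feasible_def
  proof (intro conjI ballI)
    fix e
    show "0 \<le> y e" using xb[of "snd e"] unfolding y_def covered_off_def by simp
  next
    fix i
    show "load_on E2 y i \<le> 1"
      unfolding y_def by (rule load_on_matching_le[OF assms(1,3), of "\<lambda>j. 1 - load_off E1 xbar j"]) (simp add: xb)
  next
    fix j assume "j \<in> S"
    then show "load_off E2 y j \<le> 1 - load_off E1 xbar j"
      using assms(5) unfolding load_y by simp
  qed
  then have "P2_obj S w E2 y \<le> P2_obj S w E2 ybar"
    using assms(6) unfolding P2_optimal_def by blast
  moreover have "P2_obj S w E2 y = (\<Sum>j\<in>S. w j * of_bool (j \<in> covered_off M) * (1 - load_off E1 xbar j))"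
    unfolding P2_obj_def load_y by (intro sum.cong) auto
  ultimately show ?thesis by simp
qed

lemma advice_value_attained:
  assumes "finite E2"
  obtains M where "M \<subseteq> E2" and "is_matching M" and "covered_off M \<inter> covered_off A = {}"
    and "advice_value S w E2 A = (\<Sum>j\<in>covered_off A. w j) + (\<Sum>j\<in>covered_off M. w j)"
proof -
  define V where "V = {(\<Sum>j\<in>covered_off M. w j) | M. M \<subseteq> E2 \<and> is_matching M \<and> covered_off M \<inter> covered_off A = {}}"
  have "V \<subseteq> (\<lambda>M. \<Sum>j\<in>covered_off M. w j) ` Pow E2" unfolding V_def by auto
  then have "finite V" using assms finite_subset by blast
  moreover have "(\<Sum>j\<in>covered_off {}. w j) \<in> V"
    unfolding V_def by (force simp: is_matching_def covered_off_def)
  ultimately have "Max V \<in> V" by (intro Max_in) auto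
  then show ?thesis using that unfolding advice_value_def V_def[symmetric] by (auto simp: V_def)
qed

lemma sum_eq_sum_of_bool_mult:
  fixes w :: "'a \<Rightarrow> 'b::comm_semiring_1"
  assumes "finite S" and "T \<subseteq> S"
  shows "sum w T = (\<Sum>j\<in>S. w j * of_bool (j \<in> T))"
  using assms by (simp add: sum.inter_restrict[symmetric] Int_absorb1 of_bool_def if_distrib cong: if_cong)

lemma P1_optimal_advice_first_order:
  assumes "finite E1" and "\<forall>j\<in>S. 0 \<le> w j" and "A \<subseteq> E1" and "is_matching A"
    and "P1_optimal D1 S w (\<lambda>j. if j \<in> covered_off A then fL R else fU R) E1 xbar" and "R < 1"
  shows "(\<Sum>j\<in>S. w j * (1 - (if j \<in> covered_off A then fL_cont R else fU_cont R) (load_off E1 xbar j))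
           * (of_bool (j \<in> covered_off A) - load_off E1 xbar j)) \<le> 0"
proof -
  have "P1_optimal D1 S w (\<lambda>j. if j \<in> covered_off A then fL_cont R else fU_cont R) E1 xbar"
    using assms(5) by (rule P1_optimal_integral_cong)
      (simp add: integral_fL_eq_fL_cont integral_fU_eq_fU_cont \<open>R < 1\<close>)
  then have "(\<Sum>j\<in>S. w j * (1 - (if j \<in> covered_off A then fL_cont R else fU_cont R) (load_off E1 xbar j))
      * (load_off E1 (\<lambda>e. if e \<in> A then 1 else 0) j - load_off E1 xbar j)) \<le> 0"
    using P1_feasible_matching[OF assms(1,3,4)] assms(2)
    by (rule P1_optimal_first_order)
      (simp_all add: isCont_fL_cont isCont_fU_cont mono_fL_cont mono_fU_cont \<open>R < 1\<close>)
  then show ?thesis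
    using load_off_matching[OF assms(1,3,4), of "\<lambda>_. 1"] by (simp add: of_bool_def)
qed

text \<open>The last summand is the term at j of the first-order condition for (P1), tested against the
  advice itself; it is nonpositive in total.\<close>

lemma consistency_vertex_bound:
  assumes "0 \<le> R" "R < 1" "0 \<le> w" "0 \<le> x" "x \<le> 1" and "\<not> (a \<and> m)"
  shows "consistency R * (w * of_bool a + w * of_bool m)
    \<le> w * x + w * of_bool m * (1 - x) + w * (1 - (if a then fL_cont R else fU_cont R) x) * (of_bool a - x)"
proof (cases a)
  case True
  with assms show ?thesis
    using mult_left_mono[OF consistency_le_fL_cont[OF assms(1,2,4,5)] \<open>0 \<le> w\<close>] by (simp add: algebra_simps)
next
  case False
  have "w * ((1 - fU_cont R x) * x) \<le> w * (1 - consistency R)"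
    using fU_cont_le_consistency[OF assms(1,2,4,5)] \<open>0 \<le> w\<close> by (rule mult_left_mono)
  moreover have "w * ((1 - fU_cont R x) * x) \<le> w * x"
    using fU_cont_nonneg[OF assms(2), of x] assms(3-5) by (intro mult_left_mono) (auto simp: algebra_simps)
  ultimately show ?thesis using False by (cases m) (simp_all add: algebra_simps)
qed

theorem theorem2:
  fixes D1 D2 :: "'d set" and S :: "'s set" and E1 E2 A :: "('d \<times> 's) set"
    and w :: "'s \<Rightarrow> real" and R :: real and xbar ybar :: "'d \<times> 's \<Rightarrow> real"
  assumes "finite D1" and "finite D2" and "finite S" and "D1 \<inter> D2 = {}"
    and "E1 \<subseteq> D1 \<times> S" and "E2 \<subseteq> D2 \<times> S"
    and "\<forall>j\<in>S. 0 \<le> w j"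
    and "A \<subseteq> E1" and "is_matching A"
    and "0 \<le> R" and "R \<le> 3/4"
    and "P1_optimal D1 S w (\<lambda>j. if j \<in> covered_off A then fL R else fU R) E1 xbar"
    and "P2_optimal D2 S w E1 E2 xbar ybar"
  shows "alg_value S w E1 E2 xbar ybar \<ge> (2 * sqrt (1 - R) - (1 - R)) * advice_value S w E2 A"
proof -
  define xb where "xb = load_off E1 xbar"
  define g where "g j = (if j \<in> covered_off A then fL_cont R else fU_cont R)" for j
  have "R < 1" using assms(11) by simp
  have "finite E1" "finite E2"
    using assms(1-3) finite_subset[OF assms(5)] finite_subset[OF assms(6)] by auto
  have xb: "0 \<le> xb j \<and> xb j \<le> 1" if "j \<in> S" for j
    using assms(12) P1_feasible_load_off_bounds[OF _ that] unfolding P1_optimal_def xb_def by blast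
  have first_order: "(\<Sum>j\<in>S. w j * (1 - g j (xb j)) * (of_bool (j \<in> covered_off A) - xb j)) \<le> 0"
    unfolding g_def xb_def using \<open>finite E1\<close> assms(7-9,12) \<open>R < 1\<close>
    by (rule P1_optimal_advice_first_order)
  obtain M where "M \<subseteq> E2" and "is_matching M" and disjoint: "covered_off M \<inter> covered_off A = {}"
    and advice: "advice_value S w E2 A = (\<Sum>j\<in>covered_off A. w j) + (\<Sum>j\<in>covered_off M. w j)"
    using advice_value_attained[OF \<open>finite E2\<close>] .
  have A_S: "covered_off A \<subseteq> S" and M_S: "covered_off M \<subseteq> S"
    using covered_off_subset[of A D1 S] covered_off_subset[of M D2 S] assms(5,6,8) \<open>M \<subseteq> E2\<close>
    by blast+
  have second_stage: "(\<Sum>j\<in>S. w j * of_bool (j \<in> covered_off M) * (1 - xb j)) \<le> P2_obj S w E2 ybar"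
    unfolding xb_def using M_S xb[unfolded xb_def]
    by (intro P2_optimal_ge_matching[OF \<open>finite E2\<close> \<open>M \<subseteq> E2\<close> \<open>is_matching M\<close> _ _ assms(13)]) auto
  have "consistency R * advice_value S w E2 A
      = (\<Sum>j\<in>S. consistency R * (w j * of_bool (j \<in> covered_off A) + w j * of_bool (j \<in> covered_off M)))"
    unfolding advice sum_eq_sum_of_bool_mult[OF assms(3) A_S] sum_eq_sum_of_bool_mult[OF assms(3) M_S]
    by (simp add: sum.distrib sum_distrib_left distrib_left)
  also have "\<dots> \<le> (\<Sum>j\<in>S. w j * xb j + w j * of_bool (j \<in> covered_off M) * (1 - xb j)
                          + w j * (1 - g j (xb j)) * (of_bool (j \<in> covered_off A) - xb j))"
    unfolding g_def using assms(7) xb disjoint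
    by (intro sum_mono consistency_vertex_bound[OF assms(10) \<open>R < 1\<close>]) auto
  also have "\<dots> \<le> (\<Sum>j\<in>S. w j * xb j) + P2_obj S w E2 ybar"
    using first_order second_stage by (simp add: sum.distrib)
  also have "\<dots> = alg_value S w E1 E2 xbar ybar"
    unfolding alg_value_def P2_obj_def xb_def by (simp add: sum.distrib distrib_left)
  finally show ?thesis unfolding consistency_def .
qed

end
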